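(* Let $\mathcal{X}$ be an infinite domain and $l\ge1$ an integer. Then for every integer $m\ge0$ there exists an $(l-1,m)$-difficult extended mistake tree with respect to $\mathcal{C}^l$ all of whose dashed edges are labeled $+1$ (i.e. go to the right child).
   Context: $\mathcal{C}^l$ is the class of functions $\mathcal{X}\to\{-1,+1\}$ of the form $x\mapsto1-2I(x\in D)$ with $D\subseteq\mathcal{X}$, $|D|\le l$. Extended mistake tree w.r.t. a class $\mathcal{H}$: a finite full binary tree (possibly a single leaf) in which each internal node $v$ is labeled by $x_v\in\mathcal{X}$ and has two solid downward edges, to its left child (label $-1$) and right child (label $+1$), plus one dashed downward edge to one of its two children, whose label is the label of that child's direction; each leaf is labeled by some $h\in\mathcal{H}$ with $h(x_v)$ equal to the direction label at every internal node $v$ on the root-to-leaf path. A root-to-leaf path chooses at each internal node one downward edge; its length is its number of edges. The tree is $(k,m)$-difficult if every root-to-leaf path using at most $k$ solid edges has length at least $m$. *)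

theory Defs
  imports Main
begin

definition C_class :: "nat \<Rightarrow> ('x \<Rightarrow> int) set" where
  "C_class l = {h. \<exists>D. finite D \<and> card D \<le> l \<and> h = (\<lambda>x. 1 - 2 * (if x \<in> D then 1 else 0))}"

text \<open>Extended mistake trees. Node x d L R: internal node labelled x, left child L (label -1),
  right child R (label +1); the dashed edge goes to R if d = True (label +1), to L otherwise.\<close>
datatype ('x, 'h) emtree = Leaf 'h | Node 'x bool "('x, 'h) emtree" "('x, 'h) emtree"

fun em_valid :: "('x \<Rightarrow> int) set \<Rightarrow> ('x \<times> int) list \<Rightarrow> ('x, 'x \<Rightarrow> int) emtree \<Rightarrow> bool" where
  "em_valid H cs (Leaf h) = (h \<in> H \<and> (\<forall>(x, y) \<in> set cs. h x = y))"
| "em_valid H cs (Node x d L R) = (em_valid H ((x, -1) # cs) L \<and> em_valid H ((x, 1) # cs) R)"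

definition extended_mistake_tree :: "('x \<Rightarrow> int) set \<Rightarrow> ('x, 'x \<Rightarrow> int) emtree \<Rightarrow> bool" where
  "extended_mistake_tree H t = em_valid H [] t"

text \<open>Root-to-leaf paths, recorded as (number of solid edges, length).\<close>
fun em_paths :: "('x, 'h) emtree \<Rightarrow> (nat \<times> nat) set" where
  "em_paths (Leaf h) = {(0, 0)}"
| "em_paths (Node x d L R) =
     {(s + 1, n + 1) | s n. (s, n) \<in> em_paths L}
   \<union> {(s + 1, n + 1) | s n. (s, n) \<in> em_paths R}
   \<union> {(s, n + 1) | s n. (s, n) \<in> em_paths (if d then R else L)}"

definition difficult :: "nat \<Rightarrow> nat \<Rightarrow> ('x, 'h) emtree \<Rightarrow> bool" where
  "difficult k m t = (\<forall>(s, n) \<in> em_paths t. s \<le> k \<longrightarrow> m \<le> n)"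

fun dashed_all_right :: "('x, 'h) emtree \<Rightarrow> bool" where
  "dashed_all_right (Leaf h) = True"
| "dashed_all_right (Node x d L R) = (d \<and> dashed_all_right L \<and> dashed_all_right R)"

end

theory Submission
  imports Defs
begin

text \<open>Enumerate distinct points x_0, x_1, ... of the infinite domain and query x_d at depth d.
  Every node carries a set D of at most l points, starting from D = {} and with leaf hypothesis
  x \<mapsto> 1 - 2 I(x \<in> D). The left (label -1) child adds the fresh query point to D; the right child,
  which is also the dashed one, keeps D. A branch is cut off once l points have been added, i.e.
  only after l solid left edges, so every path with at most l - 1 solid edges reaches depth m.\<close>

definition sign_hyp :: "'x set \<Rightarrow> 'x \<Rightarrow> int" where
  "sign_hyp D = (\<lambda>x. 1 - 2 * (if x \<in> D then 1 else 0))"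

lemma sign_hyp_in_C_class: "finite D \<Longrightarrow> card D \<le> l \<Longrightarrow> sign_hyp D \<in> C_class l"
  unfolding C_class_def sign_hyp_def by auto

text \<open>budget_tree f D j n d: depth at most n, at most j further points may join D,
  next query point f d.\<close>
fun budget_tree :: "(nat \<Rightarrow> 'x) \<Rightarrow> 'x set \<Rightarrow> nat \<Rightarrow> nat \<Rightarrow> nat \<Rightarrow> ('x, 'x \<Rightarrow> int) emtree" where
  "budget_tree f D j 0 d = Leaf (sign_hyp D)"
| "budget_tree f D j (Suc n) d =
     (if j = 0 then Leaf (sign_hyp D)
      else Node (f d) True (budget_tree f (insert (f d) D) (j - 1) n (Suc d))
                           (budget_tree f D j n (Suc d)))"

lemma dashed_all_right_budget_tree: "dashed_all_right (budget_tree f D j n d)"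
  by (induction n arbitrary: D j d) auto

lemma em_paths_budget_tree:
  "(s, k) \<in> em_paths (budget_tree f D j n d) \<Longrightarrow> k = n \<or> j \<le> s"
proof (induction n arbitrary: D j d s k)
  case (Suc n)
  then show ?case
    by (cases "j = 0") (auto dest!: Suc.IH)
qed simp

lemma em_valid_budget_tree:
  assumes "inj f" "finite D" "card D + j \<le> l" "D \<subseteq> f ` {..<d}"
    and "\<forall>(x, y) \<in> set cs. x \<in> f ` {..<d} \<and> sign_hyp D x = y"
  shows "em_valid (C_class l) cs (budget_tree f D j n d)"
  using assms(2-)
proof (induction n arbitrary: D j d cs)
  case 0
  then show ?case by (auto intro: sign_hyp_in_C_class)
next
  case (Suc n)
  show ?case
  proof (cases "j = 0")
    case True
    with Suc.prems show ?thesis by (auto intro: sign_hyp_in_C_class)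
  next
    case False
    have fresh: "f d \<notin> f ` {..<d}"
      using \<open>inj f\<close> by (auto dest: injD)
    with Suc.prems(3) have "f d \<notin> D" by blast
    have left: "em_valid (C_class l) ((f d, -1) # cs) (budget_tree f (insert (f d) D) (j - 1) n (Suc d))"
    proof (rule Suc.IH)
      show "card (insert (f d) D) + (j - 1) \<le> l"
        using Suc.prems(1,2) \<open>f d \<notin> D\<close> False by simp
      show "\<forall>(x, y) \<in> set ((f d, -1) # cs). x \<in> f ` {..<Suc d} \<and> sign_hyp (insert (f d) D) x = y"
        using Suc.prems(4) fresh
        by (auto simp: lessThan_Suc sign_hyp_def split: prod.splits)
    qed (use Suc.prems in \<open>auto simp: lessThan_Suc\<close>)
    have right: "em_valid (C_class l) ((f d, 1) # cs) (budget_tree f D j n (Suc d))"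
    proof (rule Suc.IH)
      show "\<forall>(x, y) \<in> set ((f d, 1) # cs). x \<in> f ` {..<Suc d} \<and> sign_hyp D x = y"
        using Suc.prems(4) \<open>f d \<notin> D\<close> by (auto simp: lessThan_Suc sign_hyp_def)
    qed (use Suc.prems in \<open>auto simp: lessThan_Suc\<close>)
    from left right False show ?thesis by simp
  qed
qed

theorem mainTheorem19:
  fixes l m :: nat
  assumes "infinite (UNIV :: 'x set)" and "l \<ge> 1"
  shows "\<exists>t :: ('x, 'x \<Rightarrow> int) emtree.
           extended_mistake_tree (C_class l) t \<and> difficult (l - 1) m t \<and> dashed_all_right t"
proof -
  obtain f :: "nat \<Rightarrow> 'x" where "inj f"
    using infinite_countable_subset[OF assms(1)] by blast
  let ?t = "budget_tree f {} l m 0"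
  have "extended_mistake_tree (C_class l) ?t"
    unfolding extended_mistake_tree_def
    using em_valid_budget_tree[OF \<open>inj f\<close>, of "{}" l l 0 "[]"] by simp
  moreover have "difficult (l - 1) m ?t"
    unfolding difficult_def using em_paths_budget_tree assms(2) by fastforce
  ultimately show ?thesis
    using dashed_all_right_budget_tree by blast
qed

end
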